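(* Let $N,d\ge1$, $\lambda,\tau>0$ with $\lambda\tau\le\frac12$, and let $\psi:[0,\infty)\to(0,\infty)$ be positive, nonincreasing, differentiable with $\psi(r)\le1$ for all $r\ge0$. Let $(x_i,v_i)_{i=1}^N$ solve $$\dot x_i(t)=v_i(t),\qquad \dot v_i(t)=\frac{\lambda}{N}\sum_{j=1}^N\psi(|x_i(t-\tau)-x_j(t-\tau)|)\,(v_j(t-\tau)-v_i(t-\tau)),\qquad t>0,$$ with initial data $(x_i,v_i)=(x_i^0,v_i^0)$ on $[-\tau,0]$, $(x_i^0,v_i^0)\in C([-\tau,0];\mathbb{R}^{2d})\cap C^1((-\tau,0);\mathbb{R}^{2d})$. Then $$\varphi(t)\ge\psi\big(d_X(0)+\sqrt{2L^0}\,t\big)\qquad\text{for all }t>\tau.$$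
   Context: $\varphi(t):=\min_{i,j}\psi(|x_i(t)-x_j(t)|)$ and $d_X(t):=\max_{i,j}|x_i(t)-x_j(t)|$. $V(t):=\frac12\sum_{i,j=1}^N|v_i(t)-v_j(t)|^2$, $D(t):=\frac12\sum_{i,j=1}^N\psi(|x_i(t)-x_j(t)|)\,|v_j(t)-v_i(t)|^2$, and $L^0:=(2\lambda\tau+1)e^{2\lambda\tau}\max_{\vartheta\in[-\tau,0]}V(\vartheta)+4\tau\lambda^3\int_{-\tau}^0\int_\theta^0 D(s)\,ds\,d\theta$. *)

theory Defs
  imports "HOL-Analysis.Analysis"
begin

definition phiF :: "nat \<Rightarrow> (real \<Rightarrow> real) \<Rightarrow> (nat \<Rightarrow> real \<Rightarrow> real^'d) \<Rightarrow> real \<Rightarrow> real" where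
  "phiF N \<psi> x t = Min {\<psi> (norm (x i t - x j t)) | i j. i < N \<and> j < N}"

definition dXF :: "nat \<Rightarrow> (nat \<Rightarrow> real \<Rightarrow> real^'d) \<Rightarrow> real \<Rightarrow> real" where
  "dXF N x t = Max {norm (x i t - x j t) | i j. i < N \<and> j < N}"

definition VF :: "nat \<Rightarrow> (nat \<Rightarrow> real \<Rightarrow> real^'d) \<Rightarrow> real \<Rightarrow> real" where
  "VF N v t = (1/2) * (\<Sum>i<N. \<Sum>j<N. (norm (v i t - v j t))\<^sup>2)"

definition DF :: "nat \<Rightarrow> (real \<Rightarrow> real) \<Rightarrow> (nat \<Rightarrow> real \<Rightarrow> real^'d) \<Rightarrow> (nat \<Rightarrow> real \<Rightarrow> real^'d) \<Rightarrow> real \<Rightarrow> real" where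
  "DF N \<psi> x v t = (1/2) * (\<Sum>i<N. \<Sum>j<N. \<psi> (norm (x i t - x j t)) * (norm (v j t - v i t))\<^sup>2)"

definition L0F :: "nat \<Rightarrow> real \<Rightarrow> real \<Rightarrow> (real \<Rightarrow> real) \<Rightarrow> (nat \<Rightarrow> real \<Rightarrow> real^'d) \<Rightarrow> (nat \<Rightarrow> real \<Rightarrow> real^'d) \<Rightarrow> real" where
  "L0F N lam \<tau> \<psi> x v =
     (2*lam*\<tau> + 1) * exp (2*lam*\<tau>) * (SUP s\<in>{-\<tau>..0}. VF N v s)
     + 4 * \<tau> * lam^3 * integral {-\<tau>..0} (\<lambda>th. integral {th..0} (DF N \<psi> x v))"

end

theory Submission
  imports Defs
begin

text \<open>
  The velocity energy V stays below L0 for all t \<ge> 0. On [0, tau] the delayed term is controlled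
  by the supremum M of V on [-tau, 0], so V' \<le> lam (V + M), and Gronwall's inequality gives
  V \<le> (2 lam tau + 1) exp (2 lam tau) M. For t \<ge> tau the functional V(t) + 4 tau lam^3 G(t),
  with G(t) the integral of D over the triangle t - 2 tau \<le> theta \<le> s \<le> t - tau, is
  nonincreasing: splitting v(t) = v(t - tau) + (v(t) - v(t - tau)) exposes the dissipation
  -lam D(t - tau) in V'; the increments v(t) - v(t - tau) are bounded, through the equation and
  Cauchy-Schwarz, by the integral of D over [t - 2 tau, t - tau], which G' compensates; and
  lam tau \<le> 1/2 makes the balance nonpositive. So all relative velocities are bounded by
  sqrt (2 L0), relative positions grow at most linearly from dX(0), and the monotonicity of psi
  gives the bound, in fact for every t \<ge> 0.
\<close>

lemma double_sum_antisym_eq_0: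
  fixes g :: "'i \<Rightarrow> 'i \<Rightarrow> 'a::real_vector"
  assumes "\<And>i j. g i j = - g j i"
  shows "(\<Sum>i\<in>A. \<Sum>j\<in>A. g i j) = 0"
proof -
  have "(\<Sum>i\<in>A. \<Sum>j\<in>A. g i j) = (\<Sum>j\<in>A. \<Sum>i\<in>A. - g j i)"
    by (subst sum.swap) (simp only: assms[symmetric])
  then have "(\<Sum>i\<in>A. \<Sum>j\<in>A. g i j) = - (\<Sum>i\<in>A. \<Sum>j\<in>A. g i j)"
    by (simp add: sum_negf)
  then have "2 *\<^sub>R (\<Sum>i\<in>A. \<Sum>j\<in>A. g i j) = 0"
    unfolding scaleR_2 by (metis add.right_inverse)
  then show ?thesis
    by simp
qed

lemma double_sum_inner_consensus:
  fixes A :: "'i set" and a b :: "'i \<Rightarrow> 'a::real_inner" and p :: "'i \<Rightarrow> 'i \<Rightarrow> real"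
  assumes p_sym: "\<And>i j. p i j = p j i"
  defines "G \<equiv> \<lambda>i. \<Sum>k\<in>A. p i k *\<^sub>R (b k - b i)"
  shows "(\<Sum>i\<in>A. \<Sum>j\<in>A. (a i - a j) \<bullet> (G i - G j))
       = - real (card A) * (\<Sum>i\<in>A. \<Sum>j\<in>A. p i j * ((a i - a j) \<bullet> (b i - b j)))"
proof -
  have sum_G: "(\<Sum>i\<in>A. G i) = 0"
    unfolding G_def by (rule double_sum_antisym_eq_0) (subst p_sym, simp add: algebra_simps)
  have "(\<Sum>i\<in>A. \<Sum>j\<in>A. (a i - a j) \<bullet> (G i - G j))
      = (\<Sum>i\<in>A. \<Sum>j\<in>A. a i \<bullet> G i + a j \<bullet> G j) - (\<Sum>i\<in>A. \<Sum>j\<in>A. a i \<bullet> G j + a j \<bullet> G i)"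
    by (simp add: inner_diff algebra_simps sum_subtractf[symmetric])
  also have "(\<Sum>i\<in>A. \<Sum>j\<in>A. a i \<bullet> G j + a j \<bullet> G i) = 0"
    using sum_G by (simp add: sum.distrib inner_sum_right[symmetric] inner_sum_left[symmetric])
  also have "(\<Sum>i\<in>A. \<Sum>j\<in>A. a i \<bullet> G i + a j \<bullet> G j) = 2 * real (card A) * (\<Sum>i\<in>A. a i \<bullet> G i)"
    by (simp add: sum.distrib sum_distrib_left[symmetric])
  also have "2 * (\<Sum>i\<in>A. a i \<bullet> G i) = - (\<Sum>i\<in>A. \<Sum>j\<in>A. p i j * ((a i - a j) \<bullet> (b i - b j)))"
  proof -
    have "(\<Sum>i\<in>A. a i \<bullet> G i) = (\<Sum>i\<in>A. \<Sum>j\<in>A. p i j * (a i \<bullet> (b j - b i)))"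
      unfolding G_def by (simp add: inner_sum_right)
    moreover have "\<dots> = (\<Sum>i\<in>A. \<Sum>j\<in>A. p i j * (a j \<bullet> (b i - b j)))"
      by (subst sum.swap) (simp add: p_sym)
    ultimately have "2 * (\<Sum>i\<in>A. a i \<bullet> G i)
        = (\<Sum>i\<in>A. \<Sum>j\<in>A. p i j * (a i \<bullet> (b j - b i)) + p i j * (a j \<bullet> (b i - b j)))"
      by (simp add: sum.distrib)
    also have "\<dots> = - (\<Sum>i\<in>A. \<Sum>j\<in>A. p i j * ((a i - a j) \<bullet> (b i - b j)))"
      by (simp add: sum_negf[symmetric] inner_diff algebra_simps)
    finally show ?thesis .
  qed
  ultimately show ?thesis by (simp add: algebra_simps)
qed

lemma has_real_derivative_norm_power2:
  fixes f :: "real \<Rightarrow> 'a::real_inner"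
  assumes "(f has_vector_derivative f') (at t)"
  shows "((\<lambda>s. (norm (f s))\<^sup>2) has_real_derivative 2 * (f t \<bullet> f')) (at t)"
proof -
  have "((\<lambda>s. f s \<bullet> f s) has_derivative (\<lambda>h. f t \<bullet> (h *\<^sub>R f') + (h *\<^sub>R f') \<bullet> f t)) (at t)"
    using assms unfolding has_vector_derivative_def by (intro has_derivative_inner)
  then have "((\<lambda>s. f s \<bullet> f s) has_real_derivative 2 * (f t \<bullet> f')) (at t)"
    unfolding has_field_derivative_def
    by (rule has_derivative_eq_rhs) (auto simp: inner_commute algebra_simps)
  then show ?thesis
    by (simp add: power2_norm_eq_inner)
qed

lemma affine_gronwall:
  fixes f f' :: "real \<Rightarrow> real"
  assumes "a \<le> b" and "continuous_on {a..b} f"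
    and "\<And>s. a < s \<Longrightarrow> s < b \<Longrightarrow> (f has_real_derivative f' s) (at s)"
    and "\<And>s. a < s \<Longrightarrow> s < b \<Longrightarrow> f' s \<le> c * (f s + M)"
  shows "f b + M \<le> (f a + M) * exp (c * (b - a))"
proof -
  define E where "E s = (f s + M) * exp (- c * s)" for s
  have "E b \<le> E a"
  proof (rule DERIV_nonpos_imp_decreasing_open[OF \<open>a \<le> b\<close>])
    fix s assume s: "a < s" "s < b"
    have "(E has_real_derivative exp (- c * s) * (f' s - c * (f s + M))) (at s)"
      unfolding E_def by (auto intro!: derivative_eq_intros assms(3)[OF s] simp: algebra_simps)
    moreover have "exp (- c * s) * (f' s - c * (f s + M)) \<le> 0"
      using assms(4)[OF s] by (simp add: mult_nonneg_nonpos)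
    ultimately show "\<exists>y. (E has_real_derivative y) (at s) \<and> y \<le> 0"
      by blast
  qed (unfold E_def, intro continuous_intros assms(2))
  then have "(f b + M) * exp (- c * b) * exp (c * b) \<le> (f a + M) * exp (- c * a) * exp (c * b)"
    unfolding E_def by simp
  then show ?thesis
    by (simp add: mult.assoc flip: exp_add) (simp add: algebra_simps)
qed

lemma has_real_derivative_shift:
  "(f has_real_derivative f') (at (t - c)) \<Longrightarrow> ((\<lambda>s. f (s - c)) has_real_derivative f') (at t)"
  using DERIV_shift[of f f' t "- c"] by simp

lemma integral_square_le:
  fixes g :: "real \<Rightarrow> real"
  assumes "a \<le> b" and g: "continuous_on {a..b} g"
  shows "(integral {a..b} g)\<^sup>2 \<le> (b - a) * integral {a..b} (\<lambda>s. (g s)\<^sup>2)"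
proof (cases "a = b")
  case False
  with \<open>a \<le> b\<close> have "0 < b - a"
    by simp
  define I where "I = integral {a..b} g"
  define c where "c = I / (b - a)"
  have "((\<lambda>s. (g s - c)\<^sup>2) has_integral integral {a..b} (\<lambda>s. (g s)\<^sup>2) - 2 * c * I + c\<^sup>2 * (b - a)) {a..b}"
  proof -
    have "((\<lambda>s. (g s)\<^sup>2 - 2 * c * g s + c\<^sup>2) has_integral
        integral {a..b} (\<lambda>s. (g s)\<^sup>2) - 2 * c * I + c\<^sup>2 * (b - a)) {a..b}"
      unfolding I_def using \<open>a \<le> b\<close> g has_integral_const_real[of "c\<^sup>2" a b]
      by (intro has_integral_add has_integral_diff has_integral_mult_right integrable_integral
          integrable_continuous_real continuous_intros) (simp_all add: mult.commute)
    then show ?thesis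
      by (simp add: power2_diff algebra_simps)
  qed
  then have "0 \<le> integral {a..b} (\<lambda>s. (g s)\<^sup>2) - 2 * c * I + c\<^sup>2 * (b - a)"
    by (rule has_integral_nonneg) simp
  also have "\<dots> = integral {a..b} (\<lambda>s. (g s)\<^sup>2) - c * I"
    using \<open>0 < b - a\<close> unfolding c_def by (simp add: power2_eq_square)
  also have "c * I = I\<^sup>2 / (b - a)"
    unfolding c_def by (simp add: power2_eq_square)
  finally show ?thesis
    using \<open>0 < b - a\<close> unfolding I_def by (simp add: field_simps)
qed simp

lemma has_real_derivative_integral_from:
  fixes f :: "real \<Rightarrow> real"
  assumes "\<And>b. continuous_on {a..b} f" and "a < t"
  shows "((\<lambda>u. integral {a..u} f) has_real_derivative f t) (at t)"
proof -
  have "((\<lambda>u. integral {a..u} f) has_real_derivative f t) (at t within {a..t + 1})"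
    using assms by (intro integral_has_real_derivative) auto
  moreover have "t \<in> interior {a..t + 1}"
    using \<open>a < t\<close> by simp
  ultimately show ?thesis
    by (metis at_within_interior)
qed

lemma integral_eq_diff_integrals_from:
  fixes f :: "real \<Rightarrow> 'a::banach"
  assumes "f integrable_on {c..b}" and "c \<le> a" "a \<le> b"
  shows "integral {a..b} f = integral {c..b} f - integral {c..a} f"
  using Henstock_Kurzweil_Integration.integral_combine[of c a b f] assms by (simp add: algebra_simps)

lemma neg_scaled_inner_le:
  fixes a b :: "'a::real_inner"
  assumes "0 \<le> p" "p \<le> 1"
  shows "- (p * (a \<bullet> b)) \<le> ((norm a)\<^sup>2 + (norm b)\<^sup>2) / 2"
proof -
  have "0 \<le> (norm (a + b))\<^sup>2"
    by simp
  then have "- (a \<bullet> b) \<le> ((norm a)\<^sup>2 + (norm b)\<^sup>2) / 2"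
    by (simp add: power2_norm_eq_inner inner_add inner_commute)
  moreover have "- (p * (a \<bullet> b)) \<le> 0 \<or> - (p * (a \<bullet> b)) \<le> - (a \<bullet> b)"
    using assms mult_left_le_one_le[of "- (a \<bullet> b)" p] mult_nonneg_nonneg[of p "a \<bullet> b"]
    by (cases "0 \<le> a \<bullet> b") auto
  moreover have "0 \<le> ((norm a)\<^sup>2 + (norm b)\<^sup>2) / 2"
    by simp
  ultimately show ?thesis
    by linarith
qed

lemma neg_scaled_inner_add_le:
  fixes b m :: "'a::real_inner"
  assumes "0 \<le> p" "p \<le> 1"
  shows "- (p * ((b + m) \<bullet> b)) \<le> - (p * (norm b)\<^sup>2) / 2 + (norm m)\<^sup>2 / 2"
proof -
  have "- (p * (m \<bullet> b)) \<le> p * ((norm m)\<^sup>2 + (norm b)\<^sup>2) / 2"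
    using neg_scaled_inner_le[of 1 m b] assms mult_left_mono by fastforce
  moreover have "p * (norm m)\<^sup>2 \<le> (norm m)\<^sup>2"
    using assms by (simp add: mult_left_le_one_le)
  ultimately show ?thesis
    by (simp add: inner_add_left power2_norm_eq_inner algebra_simps)
qed

lemma norm_diff_power2_le:
  fixes a b :: "'a::real_normed_vector"
  shows "(norm (a - b))\<^sup>2 \<le> 2 * (norm a)\<^sup>2 + 2 * (norm b)\<^sup>2"
proof -
  have "(norm (a - b))\<^sup>2 \<le> (norm a + norm b)\<^sup>2"
    by (intro power_mono norm_triangle_ineq4) simp
  also have "\<dots> \<le> 2 * (norm a)\<^sup>2 + 2 * (norm b)\<^sup>2"
    using sum_squares_bound[of "norm a" "norm b"] by (simp add: power2_sum)
  finally show ?thesis .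
qed

lemma weighted_sum_square_le:
  fixes p n :: "'i \<Rightarrow> real"
  assumes "\<And>j. 0 \<le> p j" "\<And>j. p j \<le> 1"
  shows "(\<Sum>j\<in>A. p j * n j)\<^sup>2 \<le> real (card A) * (\<Sum>j\<in>A. p j * (n j)\<^sup>2)"
proof -
  have "(\<Sum>j\<in>A. (p j * n j) * 1)\<^sup>2 \<le> (\<Sum>j\<in>A. (p j * n j)\<^sup>2) * (\<Sum>j\<in>A. 1\<^sup>2)"
    by (rule Cauchy_Schwarz_ineq_sum)
  moreover have "(\<Sum>j\<in>A. (p j * n j)\<^sup>2) \<le> (\<Sum>j\<in>A. p j * (n j)\<^sup>2)"
  proof (rule sum_mono)
    fix j
    have "(p j)\<^sup>2 \<le> p j"
      using assms[of j] by (simp add: power2_eq_square mult_left_le_one_le)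
    then show "(p j * n j)\<^sup>2 \<le> p j * (n j)\<^sup>2"
      by (simp add: power_mult_distrib mult_right_mono)
  qed
  ultimately show ?thesis
    by (simp add: mult.commute mult_left_mono order_trans)
qed

lemma two_exp_minus_one_le:
  fixes a :: real
  assumes "0 \<le> a"
  shows "2 * exp a - 1 \<le> (2 * a + 1) * exp (2 * a)"
proof -
  have "2 * exp a - 1 \<le> (exp a)\<^sup>2"
    using zero_le_power2[of "exp a - 1"] by (simp add: power2_eq_square algebra_simps)
  also have "\<dots> = exp (2 * a)"
    by (simp add: power2_eq_square flip: exp_add)
  also have "\<dots> \<le> (2 * a + 1) * exp (2 * a)"
    using assms by simp
  finally show ?thesis .
qed

lemma finite_pairs_lessThan: "finite {f i j | i j. i < (n::nat) \<and> j < n}"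
proof -
  have "{f i j | i j. i < n \<and> j < n} = case_prod f ` ({..<n} \<times> {..<n})"
    by auto
  then show ?thesis
    by simp
qed

locale delayed_cucker_smale =
  fixes N :: nat and lam \<tau> :: real and \<psi> :: "real \<Rightarrow> real"
    and x v :: "nat \<Rightarrow> real \<Rightarrow> real^'d"
  assumes N: "N \<ge> 1"
    and lam: "lam > 0" and tau: "\<tau> > 0" and lam_tau: "lam * \<tau> \<le> 1/2"
    and psi_nonneg: "\<And>r. r \<ge> 0 \<Longrightarrow> \<psi> r \<ge> 0"
    and psi_le1: "\<And>r. r \<ge> 0 \<Longrightarrow> \<psi> r \<le> 1"
    and psi_antimono: "\<And>r s. 0 \<le> r \<Longrightarrow> r \<le> s \<Longrightarrow> \<psi> s \<le> \<psi> r"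
    and psi_cont: "continuous_on {0..} \<psi>"
    and cont_x: "\<And>i. i < N \<Longrightarrow> continuous_on {-\<tau>..} (x i)"
    and cont_v: "\<And>i. i < N \<Longrightarrow> continuous_on {-\<tau>..} (v i)"
    and ode_x: "\<And>i t. i < N \<Longrightarrow> t > 0 \<Longrightarrow> (x i has_vector_derivative v i t) (at t)"
    and ode_v: "\<And>i t. i < N \<Longrightarrow> t > 0 \<Longrightarrow>
       (v i has_vector_derivative
          (lam / real N) *\<^sub>R (\<Sum>j<N. \<psi> (norm (x i (t - \<tau>) - x j (t - \<tau>))) *\<^sub>R
                                     (v j (t - \<tau>) - v i (t - \<tau>)))) (at t)"
begin

abbreviation "V \<equiv> VF N v"
abbreviation "D \<equiv> DF N \<psi> x v"

definition "weight i j s = \<psi> (norm (x i s - x j s))"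

definition "force i t = (lam / real N) *\<^sub>R (\<Sum>j<N. weight i j (t - \<tau>) *\<^sub>R (v j (t - \<tau>) - v i (t - \<tau>)))"

lemma v_has_derivative_force: "i < N \<Longrightarrow> t > 0 \<Longrightarrow> (v i has_vector_derivative force i t) (at t)"
  using ode_v unfolding force_def weight_def by auto

lemma weight_sym: "weight i j s = weight j i s"
  unfolding weight_def by (simp add: norm_minus_commute)

lemma weight_nonneg: "0 \<le> weight i j s"
  unfolding weight_def by (simp add: psi_nonneg)

lemma weight_le_1: "weight i j s \<le> 1"
  unfolding weight_def by (simp add: psi_le1)

lemma continuous_on_weight: "i < N \<Longrightarrow> j < N \<Longrightarrow> continuous_on {-\<tau>..} (weight i j)"
  unfolding weight_def
  by (rule continuous_on_compose2[OF psi_cont]) (auto intro!: continuous_intros cont_x)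

lemma continuous_on_D: "continuous_on {-\<tau>..} D"
  unfolding DF_def
  by (intro continuous_intros continuous_on_compose2[OF psi_cont])
    (auto intro!: continuous_intros cont_x cont_v)

lemma continuous_on_V: "continuous_on {-\<tau>..} V"
  unfolding VF_def by (intro continuous_intros) (auto intro!: cont_v)

lemma D_nonneg: "0 \<le> D s"
  unfolding DF_def by (auto intro!: sum_nonneg mult_nonneg_nonneg psi_nonneg)

lemma V_nonneg: "0 \<le> V s"
  unfolding VF_def by (auto intro!: sum_nonneg)

definition "V_rate t =
  - lam * (\<Sum>i<N. \<Sum>j<N. weight i j (t - \<tau>) * ((v i t - v j t) \<bullet> (v i (t - \<tau>) - v j (t - \<tau>))))"

lemma V_has_derivative:
  assumes "t > 0"
  shows "(V has_real_derivative V_rate t) (at t)"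
proof -
  have "((\<lambda>s. (norm (v i s - v j s))\<^sup>2) has_real_derivative
      2 * ((v i t - v j t) \<bullet> (force i t - force j t))) (at t)"
    if "i \<in> {..<N}" "j \<in> {..<N}" for i j
    using that assms by (intro has_real_derivative_norm_power2 has_vector_derivative_diff
        v_has_derivative_force) auto
  then have "(V has_real_derivative
      (1/2) * (\<Sum>i<N. \<Sum>j<N. 2 * ((v i t - v j t) \<bullet> (force i t - force j t)))) (at t)"
    unfolding VF_def[abs_def] by (intro DERIV_cmult DERIV_sum)
  moreover have "(1/2) * (\<Sum>i<N. \<Sum>j<N. 2 * ((v i t - v j t) \<bullet> (force i t - force j t)))
      = (lam / real N) * (\<Sum>i<N. \<Sum>j<N. (v i t - v j t) \<bullet>
          ((\<Sum>k<N. weight i k (t - \<tau>) *\<^sub>R (v k (t - \<tau>) - v i (t - \<tau>)))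
           - (\<Sum>k<N. weight j k (t - \<tau>) *\<^sub>R (v k (t - \<tau>) - v j (t - \<tau>)))))"
    unfolding force_def by (simp add: scaleR_diff_right[symmetric] sum_distrib_left)
  moreover have "\<dots> = V_rate t"
    using double_sum_inner_consensus[where A="{..<N}" and a="\<lambda>i. v i t" and b="\<lambda>i. v i (t - \<tau>)"
        and p="\<lambda>i j. weight i j (t - \<tau>)", OF weight_sym] N
    unfolding V_rate_def by simp
  ultimately show ?thesis
    by simp
qed

lemma V_rate_le: "V_rate t \<le> lam * (V t + V (t - \<tau>))"
proof -
  have "(\<Sum>i<N. \<Sum>j<N. - (weight i j (t - \<tau>) * ((v i t - v j t) \<bullet> (v i (t - \<tau>) - v j (t - \<tau>)))))
     \<le> (\<Sum>i<N. \<Sum>j<N. ((norm (v i t - v j t))\<^sup>2 + (norm (v i (t - \<tau>) - v j (t - \<tau>)))\<^sup>2) / 2)"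
    by (intro sum_mono neg_scaled_inner_le weight_nonneg weight_le_1)
  also have "\<dots> = V t + V (t - \<tau>)"
    unfolding VF_def by (simp add: sum.distrib add_divide_distrib sum_divide_distrib)
  finally have "- (\<Sum>i<N. \<Sum>j<N. weight i j (t - \<tau>) * ((v i t - v j t) \<bullet> (v i (t - \<tau>) - v j (t - \<tau>))))
      \<le> V t + V (t - \<tau>)"
    by (simp add: sum_negf)
  from mult_left_mono[OF this, of lam] show ?thesis
    unfolding V_rate_def using lam by simp
qed

abbreviation "V_init \<equiv> (SUP s\<in>{-\<tau>..0}. V s)"

lemma V_le_V_init: "s \<in> {-\<tau>..0} \<Longrightarrow> V s \<le> V_init"
proof -
  assume s: "s \<in> {-\<tau>..0}"
  have "continuous_on {-\<tau>..0} V"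
    using continuous_on_V by (rule continuous_on_subset) auto
  then have "bdd_above (V ` {-\<tau>..0})"
    by (intro bounded_imp_bdd_above compact_imp_bounded compact_continuous_image) auto
  then show ?thesis
    using s by (intro cSUP_upper)
qed

lemma V_init_nonneg: "0 \<le> V_init"
  using V_le_V_init[of 0] V_nonneg[of 0] tau by simp

lemma V_le_on_first_delay:
  assumes "0 \<le> t" "t \<le> \<tau>"
  shows "V t \<le> 2 * V_init * exp (lam * \<tau>) - V_init"
proof -
  have "V t + V_init \<le> (V 0 + V_init) * exp (lam * (t - 0))"
  proof (rule affine_gronwall[OF \<open>0 \<le> t\<close>])
    show "continuous_on {0..t} V"
      using continuous_on_V by (rule continuous_on_subset) (use tau in auto)
    fix s assume s: "0 < s" "s < t"
    then show "(V has_real_derivative V_rate s) (at s)"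
      by (intro V_has_derivative) simp
    have "V (s - \<tau>) \<le> V_init"
      using s assms by (intro V_le_V_init) auto
    then have "lam * (V s + V (s - \<tau>)) \<le> lam * (V s + V_init)"
      using lam by simp
    then show "V_rate s \<le> lam * (V s + V_init)"
      using V_rate_le[of s] by linarith
  qed
  also have "\<dots> \<le> 2 * V_init * exp (lam * \<tau>)"
    using V_le_V_init[of 0] tau lam assms V_init_nonneg
    by (intro mult_mono) auto
  finally show ?thesis
    by simp
qed

definition "Dint u = integral {-\<tau>..u} D"
definition "Dint2 u = integral {-\<tau>..u} Dint"

lemma continuous_on_D_from: "continuous_on {-\<tau>..b} D"
  using continuous_on_D by (rule continuous_on_subset) auto

lemma continuous_on_Dint: "continuous_on {-\<tau>..b} Dint"
  unfolding Dint_def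
  by (intro indefinite_integral_continuous_1 integrable_continuous_real continuous_on_D_from)

lemma continuous_on_Dint2: "continuous_on {-\<tau>..b} Dint2"
  unfolding Dint2_def
  by (intro indefinite_integral_continuous_1 integrable_continuous_real continuous_on_Dint)

lemma Dint_has_derivative: "u > -\<tau> \<Longrightarrow> (Dint has_real_derivative D u) (at u)"
  unfolding Dint_def[abs_def] by (rule has_real_derivative_integral_from[OF continuous_on_D_from])

lemma Dint2_has_derivative: "u > -\<tau> \<Longrightarrow> (Dint2 has_real_derivative Dint u) (at u)"
  unfolding Dint2_def[abs_def] by (rule has_real_derivative_integral_from[OF continuous_on_Dint])

lemma integral_D: "-\<tau> \<le> a \<Longrightarrow> a \<le> b \<Longrightarrow> integral {a..b} D = Dint b - Dint a"
  unfolding Dint_def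
  by (intro integral_eq_diff_integrals_from integrable_continuous_real continuous_on_D_from)

lemma integral_Dint: "-\<tau> \<le> a \<Longrightarrow> a \<le> b \<Longrightarrow> integral {a..b} Dint = Dint2 b - Dint2 a"
  unfolding Dint2_def
  by (intro integral_eq_diff_integrals_from integrable_continuous_real continuous_on_Dint)

lemma Dint_mono:
  assumes "-\<tau> \<le> a" "a \<le> b"
  shows "Dint a \<le> Dint b"
proof -
  have "0 \<le> integral {a..b} D"
    using assms by (intro integral_nonneg integrable_continuous_real D_nonneg
        continuous_on_subset[OF continuous_on_D_from]) auto
  then show ?thesis
    using integral_D[OF assms] by simp
qed

definition "delay_dissipation t = \<tau> * Dint (t - \<tau>) - Dint2 (t - \<tau>) + Dint2 (t - 2 * \<tau>)"

lemma delay_dissipation_eq_integral: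
  assumes "t \<ge> \<tau>"
  shows "delay_dissipation t = integral {t - 2 * \<tau>..t - \<tau>} (\<lambda>\<theta>. integral {\<theta>..t - \<tau>} D)"
proof -
  have le: "-\<tau> \<le> t - 2 * \<tau>" "t - 2 * \<tau> \<le> t - \<tau>"
    using assms tau by auto
  have "((\<lambda>\<theta>. Dint (t - \<tau>) - Dint \<theta>) has_integral \<tau> * Dint (t - \<tau>) - integral {t - 2 * \<tau>..t - \<tau>} Dint)
      {t - 2 * \<tau>..t - \<tau>}"
    using has_integral_const_real[of "Dint (t - \<tau>)" "t - 2 * \<tau>" "t - \<tau>"] le
    by (intro has_integral_diff integrable_integral integrable_continuous_real
        continuous_on_subset[OF continuous_on_Dint]) auto
  then have "integral {t - 2 * \<tau>..t - \<tau>} (\<lambda>\<theta>. Dint (t - \<tau>) - Dint \<theta>) = delay_dissipation t"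
    unfolding delay_dissipation_def using integral_Dint[OF le] by (simp add: integral_unique)
  moreover have "integral {t - 2 * \<tau>..t - \<tau>} (\<lambda>\<theta>. integral {\<theta>..t - \<tau>} D)
      = integral {t - 2 * \<tau>..t - \<tau>} (\<lambda>\<theta>. Dint (t - \<tau>) - Dint \<theta>)"
    using le by (intro integral_cong integral_D) auto
  ultimately show ?thesis
    by simp
qed

lemma delay_dissipation_nonneg:
  assumes "t \<ge> \<tau>"
  shows "0 \<le> delay_dissipation t"
proof -
  have le: "-\<tau> \<le> t - 2 * \<tau>" "t - 2 * \<tau> \<le> t - \<tau>"
    using assms tau by auto
  have "integral {t - 2 * \<tau>..t - \<tau>} Dint \<le> integral {t - 2 * \<tau>..t - \<tau>} (\<lambda>_. Dint (t - \<tau>))"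
    using le by (intro integral_le integrable_continuous_real Dint_mono
        continuous_on_subset[OF continuous_on_Dint]) auto
  then show ?thesis
    using integral_Dint[OF le] le unfolding delay_dissipation_def by simp
qed

lemma delay_dissipation_has_derivative:
  assumes "t > \<tau>"
  shows "(delay_dissipation has_real_derivative \<tau> * D (t - \<tau>) - Dint (t - \<tau>) + Dint (t - 2 * \<tau>)) (at t)"
  unfolding delay_dissipation_def[abs_def] using assms tau
  by (intro DERIV_add DERIV_diff DERIV_cmult has_real_derivative_shift Dint_has_derivative
      Dint2_has_derivative) auto

lemma continuous_on_delay_dissipation: "continuous_on {\<tau>..b} delay_dissipation"
  unfolding delay_dissipation_def[abs_def] using tau
  by (intro continuous_intros continuous_on_compose2[OF continuous_on_Dint]
        continuous_on_compose2[OF continuous_on_Dint2]) auto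

lemma norm_force_power2_le:
  "(norm (force i t))\<^sup>2
     \<le> lam\<^sup>2 / real N * (\<Sum>j<N. weight i j (t - \<tau>) * (norm (v j (t - \<tau>) - v i (t - \<tau>)))\<^sup>2)"
proof -
  let ?n = "\<lambda>j. norm (v j (t - \<tau>) - v i (t - \<tau>))"
  have "norm (\<Sum>j<N. weight i j (t - \<tau>) *\<^sub>R (v j (t - \<tau>) - v i (t - \<tau>)))
      \<le> (\<Sum>j<N. weight i j (t - \<tau>) * ?n j)"
    using norm_sum[of "\<lambda>j. weight i j (t - \<tau>) *\<^sub>R (v j (t - \<tau>) - v i (t - \<tau>))" "{..<N}"]
    by (simp add: weight_nonneg)
  then have "norm (force i t) \<le> lam / real N * (\<Sum>j<N. weight i j (t - \<tau>) * ?n j)"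
    unfolding force_def using lam by (simp add: mult_left_mono divide_right_mono)
  then have "(norm (force i t))\<^sup>2 \<le> (lam / real N * (\<Sum>j<N. weight i j (t - \<tau>) * ?n j))\<^sup>2"
    by (rule power_mono) simp
  also have "\<dots> = (lam / real N)\<^sup>2 * (\<Sum>j<N. weight i j (t - \<tau>) * ?n j)\<^sup>2"
    by (rule power_mult_distrib)
  also have "\<dots> \<le> (lam / real N)\<^sup>2 * (real N * (\<Sum>j<N. weight i j (t - \<tau>) * (?n j)\<^sup>2))"
    using weighted_sum_square_le[of "\<lambda>j. weight i j (t - \<tau>)" ?n "{..<N}"]
    by (intro mult_left_mono) (auto simp: weight_nonneg weight_le_1)
  also have "\<dots> = lam\<^sup>2 / real N * (\<Sum>j<N. weight i j (t - \<tau>) * (?n j)\<^sup>2)"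
    using N by (simp add: power2_eq_square)
  finally show ?thesis .
qed

lemma sum_norm_force_power2_le: "(\<Sum>i<N. (norm (force i t))\<^sup>2) \<le> 2 * lam\<^sup>2 / real N * D (t - \<tau>)"
proof -
  have "(\<Sum>i<N. (norm (force i t))\<^sup>2)
      \<le> (\<Sum>i<N. lam\<^sup>2 / real N * (\<Sum>j<N. weight i j (t - \<tau>) * (norm (v j (t - \<tau>) - v i (t - \<tau>)))\<^sup>2))"
    by (intro sum_mono norm_force_power2_le)
  also have "\<dots> = 2 * lam\<^sup>2 / real N * D (t - \<tau>)"
    unfolding DF_def weight_def by (simp add: sum_distrib_left)
  finally show ?thesis .
qed

lemma continuous_on_force: "i < N \<Longrightarrow> continuous_on {0..} (force i)"
  unfolding force_def using tau
  by (intro continuous_intros continuous_on_compose2[OF continuous_on_weight]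
      continuous_on_compose2[OF cont_v]) auto

lemma velocity_increment_power2_le:
  assumes "i < N" "t \<ge> \<tau>"
  shows "(norm (v i t - v i (t - \<tau>)))\<^sup>2 \<le> \<tau> * integral {t - \<tau>..t} (\<lambda>s. (norm (force i s))\<^sup>2)"
proof -
  have cont: "continuous_on {t - \<tau>..t} (force i)"
    using continuous_on_force[OF assms(1)] by (rule continuous_on_subset) (use assms tau in auto)
  have "(force i has_integral v i t - v i (t - \<tau>)) {t - \<tau>..t}"
  proof (rule fundamental_theorem_of_calculus_interior)
    show "continuous_on {t - \<tau>..t} (v i)"
      using cont_v by (rule continuous_on_subset) (use assms in auto)
    show "\<And>s. s \<in> {t - \<tau><..<t} \<Longrightarrow> (v i has_vector_derivative force i s) (at s)"
      using assms by (intro v_has_derivative_force) auto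
  qed (use tau in simp)
  then have "v i t - v i (t - \<tau>) = integral {t - \<tau>..t} (force i)"
    by (simp add: integral_unique)
  also have "norm \<dots> \<le> integral {t - \<tau>..t} (\<lambda>s. norm (force i s))"
    using cont by (intro integral_norm_bound_integral integrable_continuous_real continuous_intros) auto
  finally have "norm (v i t - v i (t - \<tau>)) \<le> integral {t - \<tau>..t} (\<lambda>s. norm (force i s))" .
  then have "(norm (v i t - v i (t - \<tau>)))\<^sup>2 \<le> (integral {t - \<tau>..t} (\<lambda>s. norm (force i s)))\<^sup>2"
    by (intro power_mono) auto
  also have "\<dots> \<le> (t - (t - \<tau>)) * integral {t - \<tau>..t} (\<lambda>s. (norm (force i s))\<^sup>2)"
    using tau cont by (intro integral_square_le continuous_intros) auto
  finally show ?thesis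
    by simp
qed

lemma integral_shifted_D:
  assumes "t \<ge> \<tau>"
  shows "integral {t - \<tau>..t} (\<lambda>s. D (s - \<tau>)) = Dint (t - \<tau>) - Dint (t - 2 * \<tau>)"
proof -
  have "((\<lambda>s. D (s - \<tau>)) has_integral Dint (t - \<tau>) - Dint (t - \<tau> - \<tau>)) {t - \<tau>..t}"
  proof (rule fundamental_theorem_of_calculus_interior)
    show "continuous_on {t - \<tau>..t} (\<lambda>s. Dint (s - \<tau>))"
      using assms by (intro continuous_on_compose2[OF continuous_on_Dint[of t]] continuous_intros) auto
    show "((\<lambda>s. Dint (s - \<tau>)) has_vector_derivative D (s - \<tau>)) (at s)" if "s \<in> {t - \<tau><..<t}" for s
      using that assms
      by (auto simp flip: has_real_derivative_iff_has_vector_derivative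
          intro!: has_real_derivative_shift Dint_has_derivative)
  qed (use tau in simp)
  then show ?thesis
    by (simp add: integral_unique)
qed

lemma sum_velocity_increments_le:
  assumes "t \<ge> \<tau>"
  shows "(\<Sum>i<N. (norm (v i t - v i (t - \<tau>)))\<^sup>2) \<le> 2 * \<tau> * lam\<^sup>2 / real N * (Dint (t - \<tau>) - Dint (t - 2 * \<tau>))"
proof -
  have int: "(\<lambda>s. (norm (force i s))\<^sup>2) integrable_on {t - \<tau>..t}" if "i < N" for i
    using that assms by (intro integrable_continuous_real continuous_intros
        continuous_on_subset[OF continuous_on_force]) auto
  then have int_sum: "(\<lambda>s. \<Sum>i<N. (norm (force i s))\<^sup>2) integrable_on {t - \<tau>..t}"
    by (intro integrable_sum) auto
  have "(\<Sum>i<N. (norm (v i t - v i (t - \<tau>)))\<^sup>2) \<le> (\<Sum>i<N. \<tau> * integral {t - \<tau>..t} (\<lambda>s. (norm (force i s))\<^sup>2))"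
    using assms by (intro sum_mono velocity_increment_power2_le) auto
  also have "\<dots> = \<tau> * integral {t - \<tau>..t} (\<lambda>s. \<Sum>i<N. (norm (force i s))\<^sup>2)"
    using integral_sum[of "{..<N}" "\<lambda>i s. (norm (force i s))\<^sup>2" "{t - \<tau>..t}"] int
    by (simp add: sum_distrib_left)
  also have "integral {t - \<tau>..t} (\<lambda>s. \<Sum>i<N. (norm (force i s))\<^sup>2)
      \<le> integral {t - \<tau>..t} (\<lambda>s. 2 * lam\<^sup>2 / real N * D (s - \<tau>))"
    using assms
    by (intro integral_le[OF int_sum] integrable_continuous_real continuous_intros
        continuous_on_compose2[OF continuous_on_D] sum_norm_force_power2_le) auto
  also have "\<dots> = 2 * lam\<^sup>2 / real N * (Dint (t - \<tau>) - Dint (t - 2 * \<tau>))"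
    using integral_shifted_D[OF assms] by simp
  finally show ?thesis
    using tau by (simp add: mult_left_mono mult.assoc mult.left_commute)
qed

lemma V_rate_le_dissipation:
  "V_rate t \<le> - lam * D (t - \<tau>) + 2 * lam * real N * (\<Sum>i<N. (norm (v i t - v i (t - \<tau>)))\<^sup>2)"
proof -
  define b where "b i = v i (t - \<tau>)" for i
  define u where "u i = v i t - v i (t - \<tau>)" for i
  have "- (weight i j (t - \<tau>) * ((v i t - v j t) \<bullet> (b i - b j)))
      \<le> ((norm (u i))\<^sup>2 + (norm (u j))\<^sup>2) - weight i j (t - \<tau>) * (norm (b j - b i))\<^sup>2 / 2" for i j
  proof -
    have "v i t - v j t = (b i - b j) + (u i - u j)"
      unfolding b_def u_def by simp
    then have "- (weight i j (t - \<tau>) * ((v i t - v j t) \<bullet> (b i - b j)))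
        \<le> - (weight i j (t - \<tau>) * (norm (b i - b j))\<^sup>2) / 2 + (norm (u i - u j))\<^sup>2 / 2"
      by (simp only:) (intro neg_scaled_inner_add_le weight_nonneg weight_le_1)
    also have "(norm (u i - u j))\<^sup>2 / 2 \<le> (norm (u i))\<^sup>2 + (norm (u j))\<^sup>2"
      using norm_diff_power2_le[of "u i" "u j"] by simp
    finally show ?thesis
      by (simp add: norm_minus_commute)
  qed
  then have "(\<Sum>i<N. \<Sum>j<N. - (weight i j (t - \<tau>) * ((v i t - v j t) \<bullet> (b i - b j))))
      \<le> (\<Sum>i<N. \<Sum>j<N. ((norm (u i))\<^sup>2 + (norm (u j))\<^sup>2) - weight i j (t - \<tau>) * (norm (b j - b i))\<^sup>2 / 2)"
    by (intro sum_mono)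
  also have "\<dots> = 2 * real N * (\<Sum>i<N. (norm (u i))\<^sup>2) - D (t - \<tau>)"
  proof -
    have "(\<Sum>i<N. \<Sum>j<N. (norm (u i))\<^sup>2 + (norm (u j))\<^sup>2) = 2 * real N * (\<Sum>i<N. (norm (u i))\<^sup>2)"
      by (simp add: sum.distrib sum_distrib_left mult.assoc)
    moreover have "(\<Sum>i<N. \<Sum>j<N. weight i j (t - \<tau>) * (norm (b j - b i))\<^sup>2 / 2) = D (t - \<tau>)"
      unfolding DF_def weight_def b_def by (simp add: sum_divide_distrib)
    ultimately show ?thesis
      by (simp add: sum_subtractf)
  qed
  finally have "- (\<Sum>i<N. \<Sum>j<N. weight i j (t - \<tau>) * ((v i t - v j t) \<bullet> (b i - b j)))
      \<le> 2 * real N * (\<Sum>i<N. (norm (u i))\<^sup>2) - D (t - \<tau>)"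
    by (simp add: sum_negf)
  from mult_left_mono[OF this, of lam] show ?thesis
    unfolding V_rate_def b_def u_def using lam by (simp add: algebra_simps)
qed

definition "lyapunov t = V t + 4 * \<tau> * lam ^ 3 * delay_dissipation t"

lemma lyapunov_rate_nonpos:
  assumes "t \<ge> \<tau>"
  shows "V_rate t + 4 * \<tau> * lam ^ 3 * (\<tau> * D (t - \<tau>) - Dint (t - \<tau>) + Dint (t - 2 * \<tau>)) \<le> 0"
proof -
  have "2 * lam * real N * (\<Sum>i<N. (norm (v i t - v i (t - \<tau>)))\<^sup>2)
      \<le> 2 * lam * real N * (2 * \<tau> * lam\<^sup>2 / real N * (Dint (t - \<tau>) - Dint (t - 2 * \<tau>)))"
    using sum_velocity_increments_le[OF assms] lam by (intro mult_left_mono) auto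
  also have "\<dots> = 4 * \<tau> * lam ^ 3 * (Dint (t - \<tau>) - Dint (t - 2 * \<tau>))"
    using N by (simp add: power2_eq_square power3_eq_cube)
  finally have "V_rate t + 4 * \<tau> * lam ^ 3 * (\<tau> * D (t - \<tau>) - Dint (t - \<tau>) + Dint (t - 2 * \<tau>))
      \<le> lam * D (t - \<tau>) * (4 * (lam * \<tau>)\<^sup>2 - 1)"
    using V_rate_le_dissipation[of t] by (simp add: algebra_simps power2_eq_square power3_eq_cube)
  also have "\<dots> \<le> 0"
  proof -
    have "(lam * \<tau>)\<^sup>2 \<le> (1/2)\<^sup>2"
      using lam tau lam_tau by (intro power_mono) auto
    then have "4 * (lam * \<tau>)\<^sup>2 - 1 \<le> 0"
      by (simp add: power2_eq_square)
    then show ?thesis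
      using lam D_nonneg[of "t - \<tau>"] by (intro mult_nonneg_nonpos) auto
  qed
  finally show ?thesis .
qed

lemma lyapunov_antimono:
  assumes "\<tau> \<le> t"
  shows "lyapunov t \<le> lyapunov \<tau>"
proof (rule DERIV_nonpos_imp_decreasing_open[OF assms])
  fix s assume s: "\<tau> < s" "s < t"
  have "(lyapunov has_real_derivative
      V_rate s + 4 * \<tau> * lam ^ 3 * (\<tau> * D (s - \<tau>) - Dint (s - \<tau>) + Dint (s - 2 * \<tau>))) (at s)"
    unfolding lyapunov_def[abs_def] using s tau
    by (intro DERIV_add DERIV_cmult V_has_derivative delay_dissipation_has_derivative) auto
  then show "\<exists>y. (lyapunov has_real_derivative y) (at s) \<and> y \<le> 0"
    using lyapunov_rate_nonpos s by fastforce
next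
  have "continuous_on {\<tau>..t} V"
    using continuous_on_V by (rule continuous_on_subset) (use tau in auto)
  then show "continuous_on {\<tau>..t} lyapunov"
    unfolding lyapunov_def[abs_def] by (intro continuous_intros continuous_on_delay_dissipation)
qed

lemma L0F_eq:
  "L0F N lam \<tau> \<psi> x v = (2 * lam * \<tau> + 1) * exp (2 * lam * \<tau>) * V_init + 4 * \<tau> * lam ^ 3 * delay_dissipation \<tau>"
  unfolding L0F_def using delay_dissipation_eq_integral[of \<tau>] by simp

lemma V_le_L0F:
  assumes "0 \<le> t"
  shows "V t \<le> L0F N lam \<tau> \<psi> x v"
proof -
  have first_delay: "V s \<le> (2 * lam * \<tau> + 1) * exp (2 * lam * \<tau>) * V_init" if "0 \<le> s" "s \<le> \<tau>" for s
  proof -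
    have "V s \<le> V_init * (2 * exp (lam * \<tau>) - 1)"
      using V_le_on_first_delay[OF that] by (simp add: algebra_simps)
    also have "\<dots> \<le> V_init * ((2 * (lam * \<tau>) + 1) * exp (2 * (lam * \<tau>)))"
      using V_init_nonneg lam tau by (intro mult_left_mono two_exp_minus_one_le) auto
    finally show ?thesis
      by (simp add: algebra_simps)
  qed
  have delay_term_nonneg: "0 \<le> 4 * \<tau> * lam ^ 3 * delay_dissipation \<tau>"
    using delay_dissipation_nonneg[of \<tau>] lam tau by simp
  consider "t \<le> \<tau>" | "\<tau> \<le> t"
    by linarith
  then show ?thesis
  proof cases
    case 1
    then show ?thesis
      using first_delay[OF assms] delay_term_nonneg unfolding L0F_eq by linarith
  next
    case 2
    have "V t \<le> lyapunov t"
      unfolding lyapunov_def using delay_dissipation_nonneg[OF 2] lam tau by simp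
    also have "\<dots> \<le> lyapunov \<tau>"
      by (rule lyapunov_antimono[OF 2])
    also have "\<dots> \<le> L0F N lam \<tau> \<psi> x v"
      unfolding lyapunov_def L0F_eq using first_delay[of \<tau>] tau by simp
    finally show ?thesis .
  qed
qed

lemma velocity_diff_le:
  assumes "0 \<le> t" "i < N" "j < N"
  shows "norm (v i t - v j t) \<le> sqrt (2 * L0F N lam \<tau> \<psi> x v)"
proof (rule real_le_rsqrt)
  have "(norm (v i t - v j t))\<^sup>2 \<le> (\<Sum>j'<N. (norm (v i t - v j' t))\<^sup>2)"
    using assms by (intro member_le_sum) auto
  also have "\<dots> \<le> (\<Sum>i'<N. \<Sum>j'<N. (norm (v i' t - v j' t))\<^sup>2)"
    using assms by (intro member_le_sum[where f="\<lambda>i'. \<Sum>j'<N. (norm (v i' t - v j' t))\<^sup>2"] sum_nonneg) auto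
  also have "\<dots> = 2 * V t"
    unfolding VF_def by simp
  also have "\<dots> \<le> 2 * L0F N lam \<tau> \<psi> x v"
    using V_le_L0F[OF assms(1)] by simp
  finally show "(norm (v i t - v j t))\<^sup>2 \<le> 2 * L0F N lam \<tau> \<psi> x v" .
qed

lemma position_diff_le:
  assumes "0 \<le> t" "i < N" "j < N"
  shows "norm (x i t - x j t) \<le> norm (x i 0 - x j 0) + sqrt (2 * L0F N lam \<tau> \<psi> x v) * t"
proof -
  let ?B = "sqrt (2 * L0F N lam \<tau> \<psi> x v)"
  have integral: "((\<lambda>s. v i s - v j s) has_integral (x i t - x j t) - (x i 0 - x j 0)) (cbox 0 t)"
    unfolding cbox_interval
  proof (rule fundamental_theorem_of_calculus_interior[OF \<open>0 \<le> t\<close>])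
    show "continuous_on {0..t} (\<lambda>s. x i s - x j s)"
      using assms tau by (intro continuous_intros continuous_on_subset[OF cont_x]) auto
    show "\<And>s. s \<in> {0<..<t} \<Longrightarrow> ((\<lambda>s. x i s - x j s) has_vector_derivative v i s - v j s) (at s)"
      using assms by (intro has_vector_derivative_diff ode_x) auto
  qed
  have "0 \<le> ?B"
    using velocity_diff_le[OF assms] norm_ge_zero order_trans by blast
  moreover have "norm (v i s - v j s) \<le> ?B" if "s \<in> cbox 0 t" for s
    using that assms by (intro velocity_diff_le) auto
  ultimately have "norm ((x i t - x j t) - (x i 0 - x j 0)) \<le> ?B * t"
    using has_integral_bound[OF _ integral] assms by simp
  then show ?thesis
    using norm_triangle_sub[of "x i t - x j t" "x i 0 - x j 0"] by linarith
qed

lemma phiF_ge: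
  assumes "0 \<le> t"
  shows "\<psi> (dXF N x 0 + sqrt (2 * L0F N lam \<tau> \<psi> x v) * t) \<le> phiF N \<psi> x t"
  unfolding phiF_def
proof (rule Min.boundedI[OF finite_pairs_lessThan])
  have "\<exists>i j. \<psi> (norm (x 0 t - x 0 t)) = \<psi> (norm (x i t - x j t)) \<and> i < N \<and> j < N"
    using N by (intro exI[of _ 0]) auto
  then show "{\<psi> (norm (x i t - x j t)) | i j. i < N \<and> j < N} \<noteq> {}"
    by blast
  fix a assume "a \<in> {\<psi> (norm (x i t - x j t)) | i j. i < N \<and> j < N}"
  then obtain i j where ij: "i < N" "j < N" and a: "a = \<psi> (norm (x i t - x j t))"
    by auto
  have "norm (x i 0 - x j 0) \<le> dXF N x 0"
    unfolding dXF_def using ij by (intro Max_ge finite_pairs_lessThan) auto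
  then have "norm (x i t - x j t) \<le> dXF N x 0 + sqrt (2 * L0F N lam \<tau> \<psi> x v) * t"
    using position_diff_le[OF assms ij] by linarith
  then show "\<psi> (dXF N x 0 + sqrt (2 * L0F N lam \<tau> \<psi> x v) * t) \<le> a"
    unfolding a by (intro psi_antimono) auto
qed

end

theorem lemma3p8:
  fixes N :: nat and lam \<tau> :: real and \<psi> :: "real \<Rightarrow> real"
    and x v :: "nat \<Rightarrow> real \<Rightarrow> real^'d"
  assumes N: "N \<ge> 1"
    and lam: "lam > 0" and tau: "\<tau> > 0" and lt: "lam * \<tau> \<le> 1/2"
    and psi_pos: "\<And>r. r \<ge> 0 \<Longrightarrow> \<psi> r > 0"
    and psi_le1: "\<And>r. r \<ge> 0 \<Longrightarrow> \<psi> r \<le> 1"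
    and psi_mono: "\<And>r s. 0 \<le> r \<Longrightarrow> r \<le> s \<Longrightarrow> \<psi> s \<le> \<psi> r"
    and psi_diff: "\<And>r. r \<ge> 0 \<Longrightarrow> \<psi> differentiable (at r within {0..})"
    and cont_x: "\<And>i. i < N \<Longrightarrow> continuous_on {-\<tau>..} (x i)"
    and cont_v: "\<And>i. i < N \<Longrightarrow> continuous_on {-\<tau>..} (v i)"
    and init_x: "\<And>i. i < N \<Longrightarrow> x i differentiable_on {-\<tau><..<0}"
    and init_v: "\<And>i. i < N \<Longrightarrow> v i differentiable_on {-\<tau><..<0}"
    and ode_x: "\<And>i t. i < N \<Longrightarrow> t > 0 \<Longrightarrow> (x i has_vector_derivative v i t) (at t)"
    and ode_v: "\<And>i t. i < N \<Longrightarrow> t > 0 \<Longrightarrow>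
       (v i has_vector_derivative
          (lam / real N) *\<^sub>R (\<Sum>j<N. \<psi> (norm (x i (t - \<tau>) - x j (t - \<tau>))) *\<^sub>R
                                     (v j (t - \<tau>) - v i (t - \<tau>)))) (at t)"
  shows "\<forall>t > \<tau>. phiF N \<psi> x t \<ge> \<psi> (dXF N x 0 + sqrt (2 * L0F N lam \<tau> \<psi> x v) * t)"
proof -
  interpret delayed_cucker_smale N lam \<tau> \<psi> x v
  proof unfold_locales
    show "0 \<le> \<psi> r" if "0 \<le> r" for r
      using psi_pos[OF that] by simp
    show "continuous_on {0..} \<psi>"
      using psi_diff differentiable_imp_continuous_within by (auto simp: continuous_on_eq_continuous_within)
  qed (fact assms)+
  show ?thesis
    using phiF_ge tau by auto
qed

end
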